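(* Let $I\subset K[x,y]$ be a monomial ideal with $G(I)=\{u_0,\ldots,u_m\}$, $u_i=x^{a_i}y^{b_i}$, ordered so that $a_0>\cdots>a_m$ and $b_0<\cdots<b_m$, and write $I=x^{a_m}y^{b_0}J$ (so $J$ is the monomial ideal generated by $u_i/(x^{a_m}y^{b_0})$, $i=0,\dots,m$). Then $I$ is componentwise polymatroidal if and only if $J$ is a $yx$-tight ideal.
   Context: A monomial ideal generated in a single degree is polymatroidal if for all $u,v\in G(I)$ and all variables $z$ with $\deg_{z}(u)>\deg_{z}(v)$ there exists a variable $w$ with $\deg_{w}(u)<\deg_{w}(v)$ and $w(u/z)\in I$ ($\deg_z$ = exponent of $z$, $G(\cdot)$ = minimal monomial generating set). $I_{\langle j\rangle}$ is the ideal generated by all degree-$j$ monomials of $I$; $I$ is componentwise polymatroidal if every nonzero $I_{\langle j\rangle}$ is polymatroidal. Let $J\subset K[x,y]$ be a $(x,y)$-primary monomial ideal with $G(J)=\{x^{\alpha_i}y^{\beta_i}: i=0,\ldots,m\}$ ordered so that $\alpha_0>\cdots>\alpha_m=0$ and $0=\beta_0<\cdots<\beta_m$. $J$ is $x$-tight if $\alpha_{m-i}=i$ for all $i=0,\ldots,m$; $y$-tight if $\beta_i=i$ for all $i=0,\ldots,m$; $yx$-tight if there exists $0\le j\le m$ with $\beta_i=i$ for all $i=0,\ldots,j$ and $\alpha_{m-i}=i$ for all $i=0,\ldots,m-j$. *)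

theory Defs
  imports Main
begin

text \<open>Monomials of K[x,y] are represented by their exponent vectors (a,b) for x^a y^b.
A monomial ideal is determined by the set of monomials it contains (an upward closed
set w.r.t. divisibility); the coefficient field K plays no role.\<close>

type_synonym mono = "nat \<times> nat"

definition mdvd :: "mono \<Rightarrow> mono \<Rightarrow> bool" where
  "mdvd u v \<longleftrightarrow> fst u \<le> fst v \<and> snd u \<le> snd v"

definition is_monomial_ideal :: "mono set \<Rightarrow> bool" where
  "is_monomial_ideal I \<longleftrightarrow> (\<forall>u\<in>I. \<forall>v. mdvd u v \<longrightarrow> v \<in> I)"

definition ideal_gen :: "mono set \<Rightarrow> mono set" where
  "ideal_gen S = {v. \<exists>u\<in>S. mdvd u v}"

definition gens :: "mono set \<Rightarrow> mono set" where
  "gens I = {u\<in>I. \<forall>v\<in>I. mdvd v u \<longrightarrow> v = u}"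

definition mdeg :: "mono \<Rightarrow> nat" where
  "mdeg u = fst u + snd u"

definition component :: "mono set \<Rightarrow> nat \<Rightarrow> mono set" where
  "component I j = ideal_gen {u\<in>I. mdeg u = j}"

text \<open>Variables: True = x, False = y.\<close>
definition vdeg :: "bool \<Rightarrow> mono \<Rightarrow> nat" where
  "vdeg z u = (if z then fst u else snd u)"

definition mul_var :: "bool \<Rightarrow> mono \<Rightarrow> mono" where
  "mul_var w u = (if w then (fst u + 1, snd u) else (fst u, snd u + 1))"

definition div_var :: "bool \<Rightarrow> mono \<Rightarrow> mono" where
  "div_var z u = (if z then (fst u - 1, snd u) else (fst u, snd u - 1))"

definition polymatroidal :: "mono set \<Rightarrow> bool" where
  "polymatroidal I \<longleftrightarrow>
     (\<exists>d. \<forall>u\<in>gens I. mdeg u = d) \<and>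
     (\<forall>u\<in>gens I. \<forall>v\<in>gens I. \<forall>z. vdeg z u > vdeg z v \<longrightarrow>
        (\<exists>w. vdeg w u < vdeg w v \<and> mul_var w (div_var z u) \<in> I))"

definition componentwise_polymatroidal :: "mono set \<Rightarrow> bool" where
  "componentwise_polymatroidal I \<longleftrightarrow>
     (\<forall>j. component I j \<noteq> {} \<longrightarrow> polymatroidal (component I j))"

definition yx_tight :: "mono set \<Rightarrow> bool" where
  "yx_tight J \<longleftrightarrow> is_monomial_ideal J \<and>
     (\<exists>m \<alpha> \<beta>. gens J = {(\<alpha> i, \<beta> i) | i. i \<le> m} \<and> J = ideal_gen (gens J) \<and>
        (\<forall>i<m. \<alpha> (Suc i) < \<alpha> i) \<and> \<alpha> m = 0 \<and>
        (\<forall>i<m. \<beta> i < \<beta> (Suc i)) \<and> \<beta> 0 = 0 \<and>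
        (\<exists>j\<le>m. (\<forall>i\<le>j. \<beta> i = i) \<and> (\<forall>i\<le>m - j. \<alpha> (m - i) = i)))"

end

theory Submission
  imports Defs
begin

(* In two variables an exchange between monomials of the same degree can only trade one x
   for one y or back, so I is componentwise polymatroidal iff for all (p,s), (q,t) in I with
   p + s = q + t and q < p also (p - 1, s + 1) lies in I, and symmetrically.  For the staircase
   of generators (a_i, b_i) this fails as soon as a y-step b_(i+1) - b_i >= 2 occurs at or
   before an x-step a_l - a_(l+1) >= 2: for the last such y-step, a monomial x^(a_i) y^t just
   below the corner (a_(i+1), b_(i+1)) has a partner of the same degree in I, while
   x^(a_i - 1) y^(t+1) is not in I.  So I is componentwise polymatroidal iff the y-steps are 1
   up to some index j and the x-steps are 1 from j on, which after normalizing a_m = b_0 = 0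
   is the yx-tightness of J. *)

lemma mdvd_refl [simp]: "mdvd u u"
  by (simp add: mdvd_def)

lemma mdvd_trans: "mdvd u v \<Longrightarrow> mdvd v w \<Longrightarrow> mdvd u w"
  by (auto simp: mdvd_def)

lemma mdvd_antisym: "mdvd u v \<Longrightarrow> mdvd v u \<Longrightarrow> u = v"
  by (auto simp: mdvd_def prod_eq_iff)

lemma is_monomial_ideal_ideal_gen: "is_monomial_ideal (ideal_gen S)"
  unfolding is_monomial_ideal_def ideal_gen_def by (blast intro: mdvd_trans)

lemma gens_ideal_gen_antichain:
  assumes antichain: "\<forall>u\<in>S. \<forall>v\<in>S. mdvd u v \<longrightarrow> u = v"
  shows "gens (ideal_gen S) = S"
proof (intro equalityI subsetI)
  fix u assume "u \<in> gens (ideal_gen S)"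
  moreover from this obtain w where "w \<in> S" "mdvd w u"
    by (auto simp: gens_def ideal_gen_def)
  moreover have "w \<in> ideal_gen S"
    using \<open>w \<in> S\<close> unfolding ideal_gen_def by (blast intro: mdvd_refl)
  ultimately show "u \<in> S" by (auto simp: gens_def)
next
  fix u assume "u \<in> S"
  have "v = u" if "v \<in> ideal_gen S" "mdvd v u" for v
  proof -
    obtain w where "w \<in> S" "mdvd w v" using \<open>v \<in> ideal_gen S\<close> by (auto simp: ideal_gen_def)
    with \<open>mdvd v u\<close> \<open>u \<in> S\<close> antichain have "w = u" by (blast intro: mdvd_trans)
    with \<open>mdvd w v\<close> \<open>mdvd v u\<close> show "v = u" by (blast intro: mdvd_antisym)
  qed
  with \<open>u \<in> S\<close> show "u \<in> gens (ideal_gen S)"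
    unfolding gens_def ideal_gen_def by (blast intro: mdvd_refl)
qed

lemma mem_component_iff:
  assumes "is_monomial_ideal I" "mdeg u = j"
  shows "u \<in> component I j \<longleftrightarrow> u \<in> I"
  using assms unfolding component_def ideal_gen_def is_monomial_ideal_def by (blast intro: mdvd_refl)

lemma gens_component: "gens (component I j) = {u \<in> I. mdeg u = j}"
  unfolding component_def
  by (rule gens_ideal_gen_antichain) (auto simp: mdvd_def mdeg_def prod_eq_iff)

definition exchange_closed :: "mono set \<Rightarrow> bool" where
  "exchange_closed I \<longleftrightarrow> (\<forall>p s q t. (p, s) \<in> I \<longrightarrow> (q, t) \<in> I \<longrightarrow> p + s = q + t \<longrightarrow>
     (q < p \<longrightarrow> (p - 1, s + 1) \<in> I) \<and> (p < q \<longrightarrow> (p + 1, s - 1) \<in> I))"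

lemma exchange_two_variables:
  assumes "p + s = q + t"
  shows "(\<forall>z. vdeg z (q, t) < vdeg z (p, s) \<longrightarrow>
            (\<exists>w. vdeg w (p, s) < vdeg w (q, t) \<and> mul_var w (div_var z (p, s)) \<in> I)) \<longleftrightarrow>
         (q < p \<longrightarrow> (p - 1, s + 1) \<in> I) \<and> (p < q \<longrightarrow> (p + 1, s - 1) \<in> I)"
  using assms by (auto simp: all_bool_eq ex_bool_eq vdeg_def mul_var_def div_var_def)

lemma polymatroidal_component_iff:
  assumes "is_monomial_ideal I"
  shows "polymatroidal (component I j) \<longleftrightarrow>
    (\<forall>p s q t. (p, s) \<in> I \<longrightarrow> (q, t) \<in> I \<longrightarrow> p + s = j \<longrightarrow> q + t = j \<longrightarrow>
       (q < p \<longrightarrow> (p - 1, s + 1) \<in> I) \<and> (p < q \<longrightarrow> (p + 1, s - 1) \<in> I))"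
proof -
  have exchanged: "mul_var w (div_var z u) \<in> component I j \<longleftrightarrow> mul_var w (div_var z u) \<in> I"
    if "mdeg u = j" "vdeg z v < vdeg z u" for u v z w
    using that by (intro mem_component_iff[OF assms])
      (auto simp: mdeg_def mul_var_def div_var_def vdeg_def)
  have "polymatroidal (component I j) \<longleftrightarrow>
    (\<forall>u\<in>I. \<forall>v\<in>I. mdeg u = j \<longrightarrow> mdeg v = j \<longrightarrow> (\<forall>z. vdeg z v < vdeg z u \<longrightarrow>
       (\<exists>w. vdeg w u < vdeg w v \<and> mul_var w (div_var z u) \<in> I)))"
    unfolding polymatroidal_def gens_component by (auto simp: exchanged)
  then show ?thesis
    by (simp add: Ball_def exchange_two_variables mdeg_def) blast
qed

lemma polymatroidal_empty: "polymatroidal {}"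
  by (simp add: polymatroidal_def gens_def)

lemma componentwise_polymatroidal_iff_exchange_closed:
  assumes "is_monomial_ideal I"
  shows "componentwise_polymatroidal I \<longleftrightarrow> exchange_closed I"
proof -
  have "componentwise_polymatroidal I \<longleftrightarrow> (\<forall>j. polymatroidal (component I j))"
    unfolding componentwise_polymatroidal_def by (metis polymatroidal_empty)
  then show ?thesis
    unfolding exchange_closed_def polymatroidal_component_iff[OF assms] by blast
qed

abbreviation staircase_ideal :: "(nat \<Rightarrow> nat) \<Rightarrow> (nat \<Rightarrow> nat) \<Rightarrow> nat \<Rightarrow> mono set" where
  "staircase_ideal a b m \<equiv> ideal_gen {(a i, b i) | i. i \<le> m}"

lemma mem_staircase_ideal_iff:
  "(p, s) \<in> staircase_ideal a b m \<longleftrightarrow> (\<exists>i\<le>m. a i \<le> p \<and> b i \<le> s)"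
  by (auto simp: ideal_gen_def mdvd_def)

lemma increasing_gap:
  fixes f :: "nat \<Rightarrow> nat"
  assumes "\<forall>i<m. f i < f (Suc i)" "i \<le> k" "k \<le> m"
  shows "f i + (k - i) \<le> f k"
  using assms(2,3)
proof (induction k rule: dec_induct)
  case (step k)
  then have "f k < f (Suc k)" using assms(1) by simp
  with step show ?case by (simp add: Suc_diff_le)
qed simp

lemma decreasing_gap:
  fixes f :: "nat \<Rightarrow> nat"
  assumes "\<forall>i<m. f (Suc i) < f i" "i \<le> k" "k \<le> m"
  shows "f k + (k - i) \<le> f i"
  using assms(2,3)
proof (induction k rule: dec_induct)
  case (step k)
  then have "f (Suc k) < f k" using assms(1) by simp
  with step show ?case by (simp add: Suc_diff_le)
qed simp

lemma unit_increments:
  fixes f :: "nat \<Rightarrow> nat"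
  assumes "\<forall>r. i \<le> r \<longrightarrow> r < k \<longrightarrow> f (Suc r) = f r + 1" "i \<le> k"
  shows "f k = f i + (k - i)"
  using assms(2,1) by (induction k rule: dec_induct) auto

lemma unit_decrements:
  fixes f :: "nat \<Rightarrow> nat"
  assumes "\<forall>r. i \<le> r \<longrightarrow> r < k \<longrightarrow> f r = f (Suc r) + 1" "i \<le> k"
  shows "f i = f k + (k - i)"
  using assms(2,1) by (induction i rule: inc_induct) auto

lemma ex_split_index:
  fixes m :: nat
  assumes "\<forall>i l. i \<le> l \<longrightarrow> l < m \<longrightarrow> P i \<or> Q l"
  shows "\<exists>j\<le>m. (\<forall>i<j. P i) \<and> (\<forall>l. j \<le> l \<longrightarrow> l < m \<longrightarrow> Q l)"
proof -
  define j where "j = (LEAST j. j = m \<or> \<not> P j)"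
  have "j = m \<or> \<not> P j"
    unfolding j_def by (rule LeastI[of _ m]) simp
  show ?thesis
  proof (intro exI conjI allI impI)
    show "j \<le> m" unfolding j_def by (rule Least_le) simp
    fix i assume "i < j"
    then show "P i" using not_less_Least[of i] \<open>j \<le> m\<close> unfolding j_def by fastforce
  next
    fix l assume "j \<le> l" "l < m"
    with \<open>j = m \<or> \<not> P j\<close> show "Q l" using assms by auto
  qed
qed

(* The stepwise form of yx-tightness, which is independent of the normalization a m = b 0 = 0. *)
definition staircase_tight :: "(nat \<Rightarrow> nat) \<Rightarrow> (nat \<Rightarrow> nat) \<Rightarrow> nat \<Rightarrow> bool" where
  "staircase_tight a b m \<longleftrightarrow> (\<exists>j\<le>m. (\<forall>i<j. b (Suc i) = b i + 1) \<and>
     (\<forall>i. j \<le> i \<longrightarrow> i < m \<longrightarrow> a i = a (Suc i) + 1))"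

lemma unit_increments_iff:
  assumes "f 0 = 0"
  shows "(\<forall>i<j. f (Suc i) = f i + 1) \<longleftrightarrow> (\<forall>i\<le>j. f i = i)"
proof
  assume steps: "\<forall>i<j. f (Suc i) = f i + 1"
  show "\<forall>i\<le>j. f i = i"
  proof (intro allI impI)
    fix i assume "i \<le> j"
    then show "f i = i"
      using unit_increments[of 0 i f] steps assms by simp
  qed
qed (simp add: Suc_leI)

lemma unit_decrements_iff:
  assumes "f m = 0" "j \<le> m"
  shows "(\<forall>i. j \<le> i \<longrightarrow> i < m \<longrightarrow> f i = f (Suc i) + 1) \<longleftrightarrow> (\<forall>i\<le>m - j. f (m - i) = i)"
proof
  assume steps: "\<forall>i. j \<le> i \<longrightarrow> i < m \<longrightarrow> f i = f (Suc i) + 1"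
  show "\<forall>i\<le>m - j. f (m - i) = i"
  proof (intro allI impI)
    fix i assume "i \<le> m - j"
    then show "f (m - i) = i"
      using unit_decrements[of "m - i" m f] steps assms by auto
  qed
next
  assume closed: "\<forall>i\<le>m - j. f (m - i) = i"
  show "\<forall>i. j \<le> i \<longrightarrow> i < m \<longrightarrow> f i = f (Suc i) + 1"
  proof (intro allI impI)
    fix i assume "j \<le> i" "i < m"
    then have "f (m - (m - i)) = m - i" "f (m - (m - Suc i)) = m - Suc i"
      using closed[rule_format, of "m - i"] closed[rule_format, of "m - Suc i"] by auto
    with \<open>i < m\<close> show "f i = f (Suc i) + 1" by simp
  qed
qed

lemma staircase_tight_iff_normal_form:
  assumes "a m = 0" "b 0 = 0"
  shows "staircase_tight a b m \<longleftrightarrow> (\<exists>j\<le>m. (\<forall>i\<le>j. b i = i) \<and> (\<forall>i\<le>m - j. a (m - i) = i))"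
proof -
  have "(\<forall>i<j. b (Suc i) = b i + 1) \<and> (\<forall>i. j \<le> i \<longrightarrow> i < m \<longrightarrow> a i = a (Suc i) + 1) \<longleftrightarrow>
      (\<forall>i\<le>j. b i = i) \<and> (\<forall>i\<le>m - j. a (m - i) = i)" if "j \<le> m" for j
    using unit_increments_iff[of b j] unit_decrements_iff[of a m j] assms that by simp
  then show ?thesis unfolding staircase_tight_def by blast
qed

locale staircase =
  fixes a b :: "nat \<Rightarrow> nat" and m :: nat
  assumes a_decreasing: "\<forall>i<m. a (Suc i) < a i"
    and b_increasing: "\<forall>i<m. b i < b (Suc i)"
begin

lemma a_gap: "i \<le> k \<Longrightarrow> k \<le> m \<Longrightarrow> a k + (k - i) \<le> a i"
  using decreasing_gap[OF a_decreasing] .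

lemma b_gap: "i \<le> k \<Longrightarrow> k \<le> m \<Longrightarrow> b i + (k - i) \<le> b k"
  using increasing_gap[OF b_increasing] .

lemma gens_staircase_ideal: "gens (staircase_ideal a b m) = {(a i, b i) | i. i \<le> m}"
proof (rule gens_ideal_gen_antichain)
  have "i = k" if "i \<le> m" "k \<le> m" "mdvd (a i, b i) (a k, b k)" for i k
    using that a_gap[of i k] b_gap[of k i] by (cases i k rule: linorder_cases) (auto simp: mdvd_def)
  then show "\<forall>u\<in>{(a i, b i) | i. i \<le> m}. \<forall>v\<in>{(a i, b i) | i. i \<le> m}. mdvd u v \<longrightarrow> u = v"
    by blast
qed

lemma x_exchange_if_tight:
  assumes "staircase_tight a b m"
    and "(p, s) \<in> staircase_ideal a b m" "(q, t) \<in> staircase_ideal a b m" "p + s = q + t" "q < p"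
  shows "(p - 1, s + 1) \<in> staircase_ideal a b m"
proof -
  obtain j where y_steps: "\<forall>i<j. b (Suc i) = b i + 1"
    and x_steps: "\<forall>i. j \<le> i \<longrightarrow> i < m \<longrightarrow> a i = a (Suc i) + 1"
    using assms(1) unfolding staircase_tight_def by blast
  obtain i where i: "i \<le> m" "a i \<le> p" "b i \<le> s"
    using assms(2) by (auto simp: mem_staircase_ideal_iff)
  obtain k where k: "k \<le> m" "a k \<le> q" "b k \<le> t"
    using assms(3) by (auto simp: mem_staircase_ideal_iff)
  show ?thesis
  proof (cases "a i < p")
    case True
    with i show ?thesis by (auto simp: mem_staircase_ideal_iff)
  next
    case False
    then have "a i = p" using i by simp
    have "i < k"
      using a_gap[of k i] i k \<open>a i = p\<close> \<open>q < p\<close> by (cases i k rule: linorder_cases) auto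
    have "b (Suc i) \<le> s + 1"
    proof (cases "i < j")
      case True
      with y_steps i show ?thesis by simp
    next
      case False
      then have "a i = a k + (k - i)"
        using unit_decrements[of i k a] x_steps \<open>i < k\<close> k by simp
      moreover have "b (Suc i) + (k - Suc i) \<le> b k"
        using b_gap[of "Suc i" k] \<open>i < k\<close> k by simp
      ultimately show ?thesis using k \<open>p + s = q + t\<close> \<open>a i = p\<close> \<open>i < k\<close> by linarith
    qed
    moreover have "a (Suc i) < p"
      using a_decreasing[rule_format, of i] \<open>a i = p\<close> \<open>i < k\<close> k by simp
    ultimately show ?thesis
      using \<open>i < k\<close> k by (auto simp: mem_staircase_ideal_iff intro!: exI[of _ "Suc i"])
  qed
qed

lemma y_exchange_if_tight:
  assumes "staircase_tight a b m"
    and "(p, s) \<in> staircase_ideal a b m" "(q, t) \<in> staircase_ideal a b m" "p + s = q + t" "p < q"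
  shows "(p + 1, s - 1) \<in> staircase_ideal a b m"
proof -
  obtain j where y_steps: "\<forall>i<j. b (Suc i) = b i + 1"
    and x_steps: "\<forall>i. j \<le> i \<longrightarrow> i < m \<longrightarrow> a i = a (Suc i) + 1"
    using assms(1) unfolding staircase_tight_def by blast
  obtain i where i: "i \<le> m" "a i \<le> p" "b i \<le> s"
    using assms(2) by (auto simp: mem_staircase_ideal_iff)
  obtain k where k: "k \<le> m" "a k \<le> q" "b k \<le> t"
    using assms(3) by (auto simp: mem_staircase_ideal_iff)
  show ?thesis
  proof (cases "b i < s")
    case True
    with i show ?thesis by (auto simp: mem_staircase_ideal_iff)
  next
    case False
    then have "b i = s" using i by simp
    have "k < i"
      using b_gap[of i k] i k \<open>b i = s\<close> \<open>p < q\<close> \<open>p + s = q + t\<close>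
      by (cases i k rule: linorder_cases) auto
    then obtain h where "i = Suc h" by (cases i) auto
    have "a h \<le> p + 1"
    proof (cases "j \<le> h")
      case True
      with x_steps i \<open>i = Suc h\<close> show ?thesis by simp
    next
      case False
      then have "b i = b k + (i - k)"
        using unit_increments[of k i b] y_steps \<open>k < i\<close> \<open>i = Suc h\<close> by simp
      moreover have "a h + (h - k) \<le> a k"
        using a_gap[of k h] \<open>k < i\<close> \<open>i = Suc h\<close> i by simp
      ultimately show ?thesis using k \<open>p + s = q + t\<close> \<open>b i = s\<close> \<open>k < i\<close> \<open>i = Suc h\<close> by linarith
    qed
    moreover have "b h < s"
      using b_increasing[rule_format, of h] \<open>b i = s\<close> \<open>i = Suc h\<close> i by simp
    ultimately show ?thesis
      using \<open>i = Suc h\<close> i by (auto simp: mem_staircase_ideal_iff intro!: exI[of _ h])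
  qed
qed

lemma exchange_obstruction:
  assumes "exchange_closed (staircase_ideal a b m)" "i < k" "k \<le> m"
    and "b i + 2 \<le> b (Suc i)" "a k + b k + 2 \<le> a i + b (Suc i)"
  shows False
proof -
  define t where "t = max (b i) (a k + b k - a i)"
  have "a k < a i" using a_gap[of i k] assms(2,3) by simp
  have "(a i, t) \<in> staircase_ideal a b m"
    using assms(2,3) by (auto simp: mem_staircase_ideal_iff t_def intro!: exI[of _ i])
  moreover have "(a k, a i + t - a k) \<in> staircase_ideal a b m"
    using assms(3) \<open>a k < a i\<close> by (auto simp: mem_staircase_ideal_iff t_def intro!: exI[of _ k])
  ultimately have "(a i - 1, t + 1) \<in> staircase_ideal a b m"
    using assms(1) \<open>a k < a i\<close> unfolding exchange_closed_def by fastforce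
  then obtain l where l: "l \<le> m" "a l \<le> a i - 1" "b l \<le> t + 1"
    by (auto simp: mem_staircase_ideal_iff)
  have "i < l"
    using a_gap[of l i] l \<open>a k < a i\<close> assms(2,3) by (cases i l rule: linorder_cases) auto
  then have "b (Suc i) \<le> b l" using b_gap[of "Suc i" l] l by simp
  with l assms(4,5) show False by (simp add: t_def)
qed

lemma y_step_or_x_step:
  assumes "exchange_closed (staircase_ideal a b m)" "i \<le> l" "l < m"
  shows "b (Suc i) = b i + 1 \<or> a l = a (Suc l) + 1"
  using assms(2,3)
proof (induction "l - i" arbitrary: i rule: less_induct)
  case less
  show ?case
  proof (rule ccontr)
    assume "\<not> ?case"
    then have y_gap: "b i + 2 \<le> b (Suc i)" and x_gap: "a (Suc l) + 2 \<le> a l"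
      using b_increasing[rule_format, of i] a_decreasing[rule_format, of l] less.prems by auto
    show False
    proof (cases "\<exists>r. i < r \<and> r \<le> l \<and> b (Suc r) \<noteq> b r + 1")
      case True
      then obtain r where "i < r" "r \<le> l" "b (Suc r) \<noteq> b r + 1" by blast
      moreover have "l - r < l - i" using \<open>i < r\<close> \<open>r \<le> l\<close> by simp
      ultimately show False using less.hyps[of r] less.prems x_gap by auto
    next
      case False
      then have "b (Suc l) = b (Suc i) + (l - i)"
        using unit_increments[of "Suc i" "Suc l" b] less.prems by auto
      moreover have "a l + (l - i) \<le> a i" using a_gap less.prems by simp
      ultimately have "a (Suc l) + b (Suc l) + 2 \<le> a i + b (Suc i)" using x_gap by linarith
      then show False
        using exchange_obstruction[OF assms(1), of i "Suc l"] y_gap less.prems by simp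
    qed
  qed
qed

lemma tight_if_exchange_closed:
  assumes "exchange_closed (staircase_ideal a b m)"
  shows "staircase_tight a b m"
  unfolding staircase_tight_def
  using ex_split_index[of m "\<lambda>i. b (Suc i) = b i + 1" "\<lambda>l. a l = a (Suc l) + 1"]
    y_step_or_x_step[OF assms] by blast

lemma exchange_closed_iff_tight:
  "exchange_closed (staircase_ideal a b m) \<longleftrightarrow> staircase_tight a b m"
  using tight_if_exchange_closed x_exchange_if_tight y_exchange_if_tight
  unfolding exchange_closed_def by blast

lemma staircase_normalized: "staircase (\<lambda>i. a i - a m) (\<lambda>i. b i - b 0) m"
proof
  have "a m \<le> a i" "b 0 \<le> b i" if "i \<le> m" for i
    using a_gap[of i m] b_gap[of 0 i] that by auto
  then show "\<forall>i<m. a (Suc i) - a m < a i - a m" "\<forall>i<m. b i - b 0 < b (Suc i) - b 0"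
    using a_decreasing b_increasing by (auto simp: less_diff_iff)
qed

lemma tight_normalized_iff:
  "staircase_tight (\<lambda>i. a i - a m) (\<lambda>i. b i - b 0) m \<longleftrightarrow> staircase_tight a b m"
proof -
  have bounds: "a m \<le> a i" "b 0 \<le> b i" if "i \<le> m" for i
    using a_gap[of i m] b_gap[of 0 i] that by auto
  have y_step: "b (Suc i) - b 0 = b i - b 0 + 1 \<longleftrightarrow> b (Suc i) = b i + 1"
    and x_step: "a i - a m = a (Suc i) - a m + 1 \<longleftrightarrow> a i = a (Suc i) + 1" if "i < m" for i
    using bounds[of i] bounds[of "Suc i"] that by auto
  have "(\<forall>i<j. b (Suc i) - b 0 = b i - b 0 + 1) \<longleftrightarrow> (\<forall>i<j. b (Suc i) = b i + 1)" if "j \<le> m" for j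
    using y_step that by (meson order_less_le_trans)
  moreover have "(\<forall>i. j \<le> i \<longrightarrow> i < m \<longrightarrow> a i - a m = a (Suc i) - a m + 1) \<longleftrightarrow>
      (\<forall>i. j \<le> i \<longrightarrow> i < m \<longrightarrow> a i = a (Suc i) + 1)" for j
    using x_step by blast
  ultimately show ?thesis unfolding staircase_tight_def by blast
qed

lemma yx_tight_iff_tight:
  assumes "a m = 0" "b 0 = 0"
  shows "yx_tight (staircase_ideal a b m) \<longleftrightarrow> staircase_tight a b m"
proof
  assume "staircase_tight a b m"
  then have "\<exists>j\<le>m. (\<forall>i\<le>j. b i = i) \<and> (\<forall>i\<le>m - j. a (m - i) = i)"
    using staircase_tight_iff_normal_form[of a m b] assms by simp
  then show "yx_tight (staircase_ideal a b m)"
    unfolding yx_tight_def gens_staircase_ideal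
    using is_monomial_ideal_ideal_gen a_decreasing b_increasing assms by blast
next
  assume "yx_tight (staircase_ideal a b m)"
  from this[unfolded yx_tight_def, THEN conjunct2] obtain m' \<alpha> \<beta>
    where gens: "gens (staircase_ideal a b m) = {(\<alpha> i, \<beta> i) | i. i \<le> m'}"
    and generated: "staircase_ideal a b m = ideal_gen (gens (staircase_ideal a b m))"
    and \<alpha>: "\<forall>i<m'. \<alpha> (Suc i) < \<alpha> i" "\<alpha> m' = 0"
    and \<beta>: "\<forall>i<m'. \<beta> i < \<beta> (Suc i)" "\<beta> 0 = 0"
    and "\<exists>j\<le>m'. (\<forall>i\<le>j. \<beta> i = i) \<and> (\<forall>i\<le>m' - j. \<alpha> (m' - i) = i)"
    by (elim exE conjE) blast
  \<comment> \<open>No need to match the enumeration (\<alpha>, \<beta>) with (a, b): both present the same ideal,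
      and exchange-closedness depends on the ideal only.\<close>
  have same_ideal: "staircase_ideal \<alpha> \<beta> m' = staircase_ideal a b m"
    unfolding gens[symmetric] by (rule generated[symmetric])
  interpret \<alpha>\<beta>: staircase \<alpha> \<beta> m' using \<alpha> \<beta> by unfold_locales
  have "staircase_tight \<alpha> \<beta> m'"
    using staircase_tight_iff_normal_form[of \<alpha> m' \<beta>] \<alpha>(2) \<beta>(2) \<open>\<exists>j\<le>m'. _\<close> by blast
  then show "staircase_tight a b m"
    using \<alpha>\<beta>.exchange_closed_iff_tight exchange_closed_iff_tight same_ideal by simp
qed

end

theorem corollary2p7:
  fixes a b :: "nat \<Rightarrow> nat" and m :: nat and I J :: "mono set"
  assumes "\<forall>i<m. a (Suc i) < a i"
    and "\<forall>i<m. b i < b (Suc i)"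
    and "I = ideal_gen {(a i, b i) | i. i \<le> m}"
    and "gens I = {(a i, b i) | i. i \<le> m}"
    and "J = ideal_gen {(a i - a m, b i - b 0) | i. i \<le> m}"
  shows "componentwise_polymatroidal I \<longleftrightarrow> yx_tight J"
proof -
  interpret staircase a b m using assms(1,2) by unfold_locales
  interpret normalized: staircase "\<lambda>i. a i - a m" "\<lambda>i. b i - b 0" m
    by (rule staircase_normalized)
  have "componentwise_polymatroidal I \<longleftrightarrow> staircase_tight a b m"
    using componentwise_polymatroidal_iff_exchange_closed[OF is_monomial_ideal_ideal_gen]
      exchange_closed_iff_tight assms(3) by simp
  also have "\<dots> \<longleftrightarrow> staircase_tight (\<lambda>i. a i - a m) (\<lambda>i. b i - b 0) m"
    by (rule tight_normalized_iff[symmetric])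
  also have "\<dots> \<longleftrightarrow> yx_tight J"
    using normalized.yx_tight_iff_tight assms(5) by simp
  finally show ?thesis .
qed

end
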